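(* Let $G=(V,E)$ be a graph and $w\in\mathbb{R}^E$ with $w(E)=\sum_{e\in E}w_e\ge 0$ and $\mathrm{mc}(G,w)>0$. Then $\mathrm{sdp}_{GW}(G,w)\le \kappa(G)\cdot \mathrm{mc}(G,w)$.
   Context: Let $V=[n]$. For $w\in\mathbb{R}^E$, $\mathrm{mc}(G,w)=\max_{x\in\{\pm1\}^n}\frac12\sum_{ij\in E}w_{ij}(1-x_ix_j)$ (max-cut), and $\mathrm{sdp}_{GW}(G,w)=\max_{X\in\mathcal{E}_n}\frac14\langle L_{G,w},X\rangle$, where $\mathcal{E}_n=\{X\succeq 0: X_{ii}=1\}$ and $L_{G,w}$ is the Laplacian matrix with $(i,i)$ entry $\sum_{j:ij\in E}w_{ij}$, $(i,j)$ entry $-w_{ij}$ if $ij\in E$ and $0$ otherwise. With $\mathrm{ip}(G,w)=\max_{x\in\{\pm1\}^n}\sum_{ij\in E}w_{ij}x_ix_j$ and $\mathrm{sdp}(G,w)=\max\sum_{ij\in E}w_{ij}u_i^Tu_j$ over unit vectors $u_i\in\mathbb{R}^n$, the Grothendieck constant is $\kappa(G)=\sup_{w\in\mathbb{R}^E}\mathrm{sdp}(G,w)/\mathrm{ip}(G,w)$. *)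

theory Defs
  imports "HOL-Analysis.Analysis"
begin

(* Vertex set V = UNIV :: 'n set (a finite type, playing the role of [n]).
   A graph is given by its edge set E :: 'n set set, each edge a 2-element set {i,j}.
   Weights w :: 'n set \<Rightarrow> real; only the values on E matter (w \<in> R^E). *)

definition simple_graph :: "'n::finite set set \<Rightarrow> bool" where
  "simple_graph E \<longleftrightarrow> (\<forall>e\<in>E. card e = 2)"

(* sum over edges ij \<in> E of f i j, for symmetric f: each edge counted once *)
definition edge_sum :: "'n::finite set set \<Rightarrow> ('n \<Rightarrow> 'n \<Rightarrow> real) \<Rightarrow> real" where
  "edge_sum E f = (1/2) * (\<Sum>i\<in>UNIV. \<Sum>j\<in>UNIV. if {i,j} \<in> E then f i j else 0)"

definition sign_vectors :: "('n::finite \<Rightarrow> real) set" where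
  "sign_vectors = {x. \<forall>i. x i \<in> {-1, 1}}"

definition mc :: "'n::finite set set \<Rightarrow> ('n set \<Rightarrow> real) \<Rightarrow> real" where
  "mc E w = Max ((\<lambda>x. (1/2) * edge_sum E (\<lambda>i j. w {i,j} * (1 - x i * x j))) ` sign_vectors)"

definition ip :: "'n::finite set set \<Rightarrow> ('n set \<Rightarrow> real) \<Rightarrow> real" where
  "ip E w = Max ((\<lambda>x. edge_sum E (\<lambda>i j. w {i,j} * (x i * x j))) ` sign_vectors)"

definition sdp :: "'n::finite set set \<Rightarrow> ('n set \<Rightarrow> real) \<Rightarrow> real" where
  "sdp E w = Sup ((\<lambda>u. edge_sum E (\<lambda>i j. w {i,j} * (u i \<bullet> u j)))
                 ` {u :: 'n \<Rightarrow> real^'n. \<forall>i. norm (u i) = 1})"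

definition kappa :: "'n::finite set set \<Rightarrow> real" where
  "kappa E = Sup ((\<lambda>w. sdp E w / ip E w) ` (UNIV :: ('n set \<Rightarrow> real) set))"

definition psd :: "real^'n^'n \<Rightarrow> bool" where
  "psd X \<longleftrightarrow> transpose X = X \<and> (\<forall>x. 0 \<le> x \<bullet> (X *v x))"

definition elliptope :: "(real^'n::finite^'n) set" where
  "elliptope = {X. psd X \<and> (\<forall>i. X $ i $ i = 1)}"

definition laplacian :: "'n::finite set set \<Rightarrow> ('n set \<Rightarrow> real) \<Rightarrow> real^'n^'n" where
  "laplacian E w = (\<chi> i j. if i = j then (\<Sum>k\<in>{k. {i,k} \<in> E}. w {i,k})
                           else if {i,j} \<in> E then - w {i,j} else 0)"

definition frob :: "real^'n::finite^'n \<Rightarrow> real^'n^'n \<Rightarrow> real" where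
  "frob A B = (\<Sum>i\<in>UNIV. \<Sum>j\<in>UNIV. A $ i $ j * B $ i $ j)"

definition sdp_GW :: "'n::finite set set \<Rightarrow> ('n set \<Rightarrow> real) \<Rightarrow> real" where
  "sdp_GW E w = Sup ((\<lambda>X. (1/4) * frob (laplacian E w) X) ` elliptope)"

end

theory Submission
  imports Defs
begin

text \<open>
  Write \<open>W = w(E)\<close>. Max-cut is the integer program of the negated weights, shifted and
  halved: \<open>mc(G,w) = (W + ip(G,-w))/2\<close>. Every \<open>X\<close> in the elliptope is the Gram matrix of
  unit vectors \<open>u\<^sub>i\<close> (built one vertex at a time, as in a Cholesky factorisation), and then
  \<open>\<langle>L,X\<rangle>/4 = (W + \<Sum>\<^sub>i\<^sub>j -w\<^sub>i\<^sub>j u\<^sub>i\<bullet>u\<^sub>j)/2\<close>. Hence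
  \<open>sdp\<^sub>G\<^sub>W(G,w) \<le> (W + sdp(G,-w))/2 \<le> \<kappa>(G) (W + ip(G,-w))/2 = \<kappa>(G) mc(G,w)\<close>,
  using \<open>W \<ge> 0\<close> and \<open>\<kappa>(G) \<ge> 1\<close>. For \<open>\<kappa>\<close> to bound \<open>sdp/ip\<close> at all, its defining
  supremum must be over a bounded set: \<open>ip \<ge> 0\<close> and \<open>sdp \<le> |E| ip\<close> follow by averaging over
  all sign vectors \<open>y\<close>, using the orthogonality of the monomials \<open>\<Prod>i\<in>A. y i\<close>.
\<close>

lemma simple_graph_edge_neq: "simple_graph E \<Longrightarrow> {i, j} \<in> E \<Longrightarrow> i \<noteq> j"
  by (auto simp: simple_graph_def dest!: bspec[of _ _ "{i, j}"])

lemma edge_sum_cong: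
  "(\<And>i j. {i, j} \<in> E \<Longrightarrow> f i j = g i j) \<Longrightarrow> edge_sum E f = edge_sum E g"
  unfolding edge_sum_def by (intro arg_cong[where f="(*) _"] sum.cong refl) auto

lemma edge_sum_mono:
  "(\<And>i j. {i, j} \<in> E \<Longrightarrow> f i j \<le> g i j) \<Longrightarrow> edge_sum E f \<le> edge_sum E g"
  unfolding edge_sum_def by (intro mult_left_mono sum_mono) auto

lemma edge_sum_add: "edge_sum E (\<lambda>i j. f i j + g i j) = edge_sum E f + edge_sum E g"
proof -
  have "(if {i, j} \<in> E then f i j + g i j else 0)
      = (if {i, j} \<in> E then f i j else 0) + (if {i, j} \<in> E then g i j else 0)" for i j
    by simp
  then show ?thesis unfolding edge_sum_def by (simp add: sum.distrib ring_distribs)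
qed

lemma card_ordered_pairs_of_doubleton:
  assumes "card e = 2"
  shows "card {p. {fst p, snd p} = e} = 2"
proof -
  obtain a b where "a \<noteq> b" "e = {a, b}" using assms by (metis card_2_iff)
  then have "{p. {fst p, snd p} = e} = {(a, b), (b, a)}" by (auto simp: doubleton_eq_iff)
  with \<open>a \<noteq> b\<close> show ?thesis by simp
qed

lemma edge_sum_eq_sum_edges:
  fixes E :: "'n::finite set set"
  assumes "simple_graph E"
  shows "edge_sum E (\<lambda>i j. g {i, j}) = (\<Sum>e\<in>E. g e)"
proof -
  let ?pairs = "\<lambda>e. {p :: 'n \<times> 'n. {fst p, snd p} = e}"
  have "(\<Sum>i\<in>UNIV. \<Sum>j\<in>UNIV. if {i, j} \<in> E then g {i, j} else 0)
      = (\<Sum>p\<in>UNIV. if {fst p, snd p} \<in> E then g {fst p, snd p} else 0)"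
    by (simp add: sum.cartesian_product case_prod_beta UNIV_Times_UNIV[symmetric]
        del: UNIV_Times_UNIV cong: if_cong)
  also have "\<dots> = (\<Sum>p\<in>{p :: 'n \<times> 'n. {fst p, snd p} \<in> E}. g {fst p, snd p})"
    by (simp add: sum.inter_filter[symmetric])
  also have "\<dots> = (\<Sum>e\<in>E. \<Sum>p\<in>?pairs e. g e)"
    by (subst sum.group[symmetric, where g="\<lambda>p. {fst p, snd p}"])
       (auto intro!: sum.cong arg_cong[where f=card])
  also have "\<dots> = (\<Sum>e\<in>E. 2 * g e)"
    using assms by (intro sum.cong refl) (simp add: simple_graph_def card_ordered_pairs_of_doubleton)
  finally show ?thesis by (simp add: edge_sum_def sum_distrib_left)
qed

lemma finite_sign_vectors: "finite (sign_vectors :: ('n::finite \<Rightarrow> real) set)"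
proof -
  have PiE: "sign_vectors = PiE (UNIV :: 'n set) (\<lambda>_. {-1, 1 :: real})"
    by (auto simp: sign_vectors_def PiE_def Pi_def extensional_def)
  show ?thesis unfolding PiE by (rule finite_PiE) auto
qed

lemma one_in_sign_vectors: "(\<lambda>_. 1) \<in> sign_vectors"
  by (simp add: sign_vectors_def)

lemma card_sign_vectors_pos: "0 < card (sign_vectors :: ('n::finite \<Rightarrow> real) set)"
  using finite_sign_vectors one_in_sign_vectors by (auto simp: card_gt_0_iff)

lemma sign_vector_abs: "y \<in> sign_vectors \<Longrightarrow> \<bar>y i\<bar> = 1"
  by (auto simp: sign_vectors_def dest: spec[of _ i])

lemma sign_vector_prod_abs: "y \<in> sign_vectors \<Longrightarrow> \<bar>prod y A\<bar> = 1"
  by (simp add: abs_prod sign_vector_abs)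

lemma sign_vector_prod_square: "y \<in> sign_vectors \<Longrightarrow> prod y A * prod y A = 1"
  using sign_vector_prod_abs[of y A] abs_mult_self_eq[of "prod y A"] by simp

lemma sign_vectors_flip: "y \<in> sign_vectors \<Longrightarrow> y(k := - y k) \<in> sign_vectors"
  by (auto simp: sign_vectors_def)

lemma sum_sign_vectors_eq_0_if_flip_odd:
  fixes g :: "('n::finite \<Rightarrow> real) \<Rightarrow> real"
  assumes "\<And>y. y \<in> sign_vectors \<Longrightarrow> g (y(k := - y k)) = - g y"
  shows "(\<Sum>y\<in>sign_vectors. g y) = 0"
proof -
  have "(\<Sum>y\<in>sign_vectors. g y) = (\<Sum>y\<in>sign_vectors. g (y(k := - y k)))"
    by (rule sum.reindex_bij_witness[where i="\<lambda>y. y(k := - y k)" and j="\<lambda>y. y(k := - y k)"])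
       (auto simp: sign_vectors_flip)
  also have "\<dots> = - (\<Sum>y\<in>sign_vectors. g y)"
    using assms by (simp add: sum_negf)
  finally show ?thesis by simp
qed

lemma prod_flip:
  fixes y :: "'a \<Rightarrow> real"
  assumes "finite A"
  shows "prod (y(k := - y k)) A = (if k \<in> A then - prod y A else prod y A)"
proof (cases "k \<in> A")
  case True
  then show ?thesis
    using assms by (simp add: prod.remove[of A k] prod.cong[of "A - {k}" _ "y(k := - y k)" y])
qed (auto intro!: prod.cong)

lemma sum_sign_vectors_prod_mult_prod:
  fixes A B :: "'n::finite set"
  shows "(\<Sum>y\<in>sign_vectors. prod y A * prod y B)
    = (if A = B then real (card (sign_vectors :: ('n \<Rightarrow> real) set)) else 0)"
proof (cases "A = B")
  case True
  then show ?thesis by (simp add: sign_vector_prod_square)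
next
  case False
  then obtain k where "k \<in> A \<longleftrightarrow> k \<notin> B" by blast
  then have "(\<Sum>y\<in>sign_vectors. prod y A * prod y B) = 0"
    by (intro sum_sign_vectors_eq_0_if_flip_odd[where k=k]) (auto simp: prod_flip simp del: fun_upd_apply)
  with False show ?thesis by simp
qed

lemma sum_sign_vectors_prod:
  fixes A :: "'n::finite set"
  assumes "A \<noteq> {}"
  shows "(\<Sum>y\<in>sign_vectors. prod y A) = 0"
  using sum_sign_vectors_prod_mult_prod[of A "{}"] assms by simp

lemma edge_sum_sign_form:
  fixes E :: "'n::finite set set"
  assumes "simple_graph E"
  shows "edge_sum E (\<lambda>i j. w {i, j} * (y i * y j)) = (\<Sum>e\<in>E. w e * prod y e)"
proof -
  have "edge_sum E (\<lambda>i j. w {i, j} * (y i * y j)) = edge_sum E (\<lambda>i j. w {i, j} * prod y {i, j})"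
    using simple_graph_edge_neq[OF assms] by (intro edge_sum_cong) simp
  also have "\<dots> = (\<Sum>e\<in>E. w e * prod y e)"
    by (rule edge_sum_eq_sum_edges[OF assms])
  finally show ?thesis .
qed

lemma ip_eq_Max_sign_form:
  assumes "simple_graph E"
  shows "ip E w = Max ((\<lambda>y. \<Sum>e\<in>E. w e * prod y e) ` sign_vectors)"
  unfolding ip_def edge_sum_sign_form[OF assms] ..

lemma ip_empty: "ip {} w = 0"
  by (simp add: ip_eq_Max_sign_form simple_graph_def image_constant[OF one_in_sign_vectors])

lemma sign_form_le_ip:
  assumes "simple_graph E" "y \<in> sign_vectors"
  shows "(\<Sum>e\<in>E. w e * prod y e) \<le> ip E w"
  unfolding ip_eq_Max_sign_form[OF assms(1)] using assms(2) finite_sign_vectors by (intro Max_ge) auto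

lemma sum_sign_vectors_sign_form:
  fixes E :: "'n::finite set set"
  assumes "simple_graph E"
  shows "(\<Sum>y\<in>sign_vectors. \<Sum>e\<in>E. w e * prod y e) = 0"
proof -
  have "e \<noteq> {}" if "e \<in> E" for e
    using assms that by (auto simp: simple_graph_def)
  then have "(\<Sum>e\<in>E. w e * (\<Sum>y\<in>sign_vectors. prod y e)) = 0"
    by (simp add: sum_sign_vectors_prod)
  then show ?thesis
    by (subst sum.swap) (simp add: sum_distrib_left)
qed

lemma sum_sign_vectors_sign_form_mult:
  fixes E :: "'n::finite set set" and w :: "'n set \<Rightarrow> real"
  assumes "d \<in> E"
  shows "(\<Sum>y\<in>sign_vectors. (\<Sum>e\<in>E. w e * prod y e) * prod y d)
    = card (sign_vectors :: ('n \<Rightarrow> real) set) * w d"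
proof -
  have "(\<Sum>y\<in>sign_vectors. (\<Sum>e\<in>E. w e * prod y e) * prod y d)
      = (\<Sum>y\<in>sign_vectors. \<Sum>e\<in>E. w e * (prod y e * prod y d))"
    by (simp add: sum_distrib_right mult.assoc)
  also have "\<dots> = (\<Sum>e\<in>E. w e * (\<Sum>y\<in>sign_vectors. prod y e * prod y d))"
    by (subst sum.swap) (simp add: sum_distrib_left)
  also have "\<dots> = (\<Sum>e\<in>E. if e = d then w d * card (sign_vectors :: ('n \<Rightarrow> real) set) else 0)"
    by (intro sum.cong refl) (simp add: sum_sign_vectors_prod_mult_prod)
  also have "\<dots> = card (sign_vectors :: ('n \<Rightarrow> real) set) * w d"
    using assms by simp
  finally show ?thesis .
qed

lemma ip_nonneg:
  fixes E :: "'n::finite set set"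
  assumes "simple_graph E"
  shows "0 \<le> ip E w"
proof -
  have "0 = (\<Sum>y\<in>sign_vectors. \<Sum>e\<in>E. w e * prod y e)"
    using sum_sign_vectors_sign_form[OF assms] by simp
  also have "\<dots> \<le> (\<Sum>y\<in>(sign_vectors :: ('n \<Rightarrow> real) set). ip E w)"
    using sign_form_le_ip[OF assms] by (rule sum_mono)
  finally show ?thesis
    using card_sign_vectors_pos[where 'n='n] by (auto simp: zero_le_mult_iff)
qed

text \<open>Average the objective against the nonnegative weights \<open>1 + sgn(w d) \<Prod>i\<in>d. y i\<close>:
  by orthogonality only the term of edge \<open>d\<close> survives.\<close>
lemma abs_weight_le_ip:
  fixes E :: "'n::finite set set"
  assumes "simple_graph E" "d \<in> E"
  shows "\<bar>w d\<bar> \<le> ip E w"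
proof -
  define N where "N = real (card (sign_vectors :: ('n \<Rightarrow> real) set))"
  define s :: real where "s = sgn (w d)"
  have "(\<Sum>y\<in>sign_vectors. (\<Sum>e\<in>E. w e * prod y e) * (1 + s * prod y d))
      = (\<Sum>y\<in>sign_vectors. \<Sum>e\<in>E. w e * prod y e)
        + s * (\<Sum>y\<in>sign_vectors. (\<Sum>e\<in>E. w e * prod y e) * prod y d)"
    by (simp add: algebra_simps sum.distrib sum_distrib_left)
  also have "\<dots> = N * \<bar>w d\<bar>"
    using sum_sign_vectors_sign_form[OF assms(1)] sum_sign_vectors_sign_form_mult[OF assms(2)]
    by (simp add: N_def s_def abs_sgn)
  finally have "N * \<bar>w d\<bar> = (\<Sum>y\<in>sign_vectors. (\<Sum>e\<in>E. w e * prod y e) * (1 + s * prod y d))"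
    by simp
  also have "\<dots> \<le> (\<Sum>y\<in>sign_vectors. ip E w * (1 + s * prod y d))"
  proof (rule sum_mono)
    fix y :: "'n \<Rightarrow> real" assume y: "y \<in> sign_vectors"
    have "\<bar>s * prod y d\<bar> \<le> 1"
      using sign_vector_prod_abs[OF y] by (simp add: s_def abs_mult abs_sgn_eq)
    then show "(\<Sum>e\<in>E. w e * prod y e) * (1 + s * prod y d) \<le> ip E w * (1 + s * prod y d)"
      using sign_form_le_ip[OF assms(1) y] by (intro mult_right_mono) auto
  qed
  also have "\<dots> = N * ip E w"
  proof -
    have "d \<noteq> {}" using assms by (auto simp: simple_graph_def)
    then show ?thesis
      by (simp add: N_def distrib_left sum.distrib sum_distrib_left[symmetric] sum_sign_vectors_prod)
  qed
  finally show ?thesis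
    using card_sign_vectors_pos[where 'n='n] by (simp add: N_def)
qed

lemma vector_configuration_value_le:
  fixes E :: "'n::finite set set" and u :: "'n \<Rightarrow> real^'n"
  assumes "simple_graph E" "\<forall>i. norm (u i) = 1"
  shows "edge_sum E (\<lambda>i j. w {i, j} * (u i \<bullet> u j)) \<le> card E * ip E w"
proof -
  have "edge_sum E (\<lambda>i j. w {i, j} * (u i \<bullet> u j)) \<le> edge_sum E (\<lambda>i j. \<bar>w {i, j}\<bar>)"
  proof (rule edge_sum_mono)
    fix i j
    have "\<bar>u i \<bullet> u j\<bar> \<le> 1"
      using Cauchy_Schwarz_ineq2[of "u i" "u j"] assms(2) by simp
    then have "\<bar>w {i, j} * (u i \<bullet> u j)\<bar> \<le> \<bar>w {i, j}\<bar>"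
      by (simp add: abs_mult mult_left_le)
    then show "w {i, j} * (u i \<bullet> u j) \<le> \<bar>w {i, j}\<bar>"
      by linarith
  qed
  also have "\<dots> = (\<Sum>e\<in>E. \<bar>w e\<bar>)"
    by (rule edge_sum_eq_sum_edges[OF assms(1)])
  also have "\<dots> \<le> (\<Sum>e\<in>E. ip E w)"
    using abs_weight_le_ip[OF assms(1)] by (rule sum_mono)
  finally show ?thesis by simp
qed

lemma bdd_above_vector_configuration_values:
  fixes E :: "'n::finite set set"
  assumes "simple_graph E"
  shows "bdd_above ((\<lambda>u. edge_sum E (\<lambda>i j. w {i, j} * (u i \<bullet> u j)))
    ` {u :: 'n \<Rightarrow> real^'n. \<forall>i. norm (u i) = 1})"
  using vector_configuration_value_le[OF assms] by (intro bdd_aboveI2[where M="card E * ip E w"]) simp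

lemma vector_configuration_value_le_sdp:
  fixes E :: "'n::finite set set" and u :: "'n \<Rightarrow> real^'n"
  assumes "simple_graph E" "\<forall>i. norm (u i) = 1"
  shows "edge_sum E (\<lambda>i j. w {i, j} * (u i \<bullet> u j)) \<le> sdp E w"
  unfolding sdp_def
  using assms bdd_above_vector_configuration_values[OF assms(1)] by (auto intro: cSup_upper)

lemma sdp_le_card_mult_ip:
  fixes E :: "'n::finite set set"
  assumes "simple_graph E"
  shows "sdp E w \<le> card E * ip E w"
proof -
  have "(\<lambda>_. axis undefined 1) \<in> {u :: 'n \<Rightarrow> real^'n. \<forall>i. norm (u i) = 1}"
    by simp
  then have "{u :: 'n \<Rightarrow> real^'n. \<forall>i. norm (u i) = 1} \<noteq> {}"
    by (metis empty_iff)
  then show ?thesis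
    unfolding sdp_def using vector_configuration_value_le[OF assms] by (intro cSup_least) auto
qed

lemma ip_le_sdp:
  fixes E :: "'n::finite set set"
  assumes "simple_graph E"
  shows "ip E w \<le> sdp E w"
proof -
  have "ip E w \<in> (\<lambda>y. edge_sum E (\<lambda>i j. w {i, j} * (y i * y j))) ` sign_vectors"
    unfolding ip_def using finite_sign_vectors one_in_sign_vectors by (intro Max_in) auto
  then obtain y where y: "y \<in> sign_vectors" "ip E w = edge_sum E (\<lambda>i j. w {i, j} * (y i * y j))"
    by blast
  define u :: "'n \<Rightarrow> real^'n" where "u i = y i *\<^sub>R axis undefined 1" for i
  have "\<forall>i. norm (u i) = 1"
    using sign_vector_abs[OF y(1)] by (simp add: u_def)
  then have "edge_sum E (\<lambda>i j. w {i, j} * (u i \<bullet> u j)) \<le> sdp E w"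
    by (rule vector_configuration_value_le_sdp[OF assms])
  moreover have "u i \<bullet> u j = y i * y j" for i j
    by (simp add: u_def)
  ultimately show ?thesis
    using y(2) by simp
qed

lemma sdp_div_ip_le_kappa:
  fixes E :: "'n::finite set set"
  assumes "simple_graph E"
  shows "sdp E w / ip E w \<le> kappa E"
proof -
  have "sdp E v / ip E v \<le> card E" for v
    using sdp_le_card_mult_ip[OF assms, of v] ip_nonneg[OF assms, of v]
    by (cases "ip E v = 0") (auto simp: divide_le_eq)
  then have "bdd_above (range (\<lambda>v. sdp E v / ip E v))"
    by (intro bdd_aboveI2[where M="real (card E)"])
  then show ?thesis
    unfolding kappa_def by (intro cSup_upper) auto
qed

lemma sdp_le_kappa_mult_ip:
  fixes E :: "'n::finite set set"
  assumes "simple_graph E"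
  shows "sdp E w \<le> kappa E * ip E w"
proof (cases "ip E w = 0")
  case True
  then show ?thesis using sdp_le_card_mult_ip[OF assms, of w] by simp
next
  case False
  then have "0 < ip E w" using ip_nonneg[OF assms, of w] by simp
  then show ?thesis using sdp_div_ip_le_kappa[OF assms, of w] by (simp add: divide_le_eq)
qed

lemma one_le_kappa:
  fixes E :: "'n::finite set set"
  assumes "simple_graph E" "E \<noteq> {}"
  shows "1 \<le> kappa E"
proof -
  obtain d where "d \<in> E" using assms(2) by blast
  then have "0 < ip E (\<lambda>_. 1)"
    using abs_weight_le_ip[OF assms(1), of d "\<lambda>_. 1"] by simp
  then have "1 \<le> sdp E (\<lambda>_. 1) / ip E (\<lambda>_. 1)"
    using ip_le_sdp[OF assms(1)] by simp
  also have "\<dots> \<le> kappa E"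
    by (rule sdp_div_ip_le_kappa[OF assms(1)])
  finally show ?thesis .
qed

lemma psd_form_commute:
  assumes "psd X"
  shows "x \<bullet> (X *v y) = y \<bullet> (X *v x)"
proof -
  have "x \<bullet> (X *v y) = (x v* X) \<bullet> y"
    by (simp add: dot_lmul_matrix)
  also have "x v* X = transpose X *v x"
    by simp
  also have "transpose X = X"
    using assms by (simp add: psd_def)
  finally show ?thesis by (simp add: inner_commute)
qed

lemma psd_symmetric:
  assumes "psd X"
  shows "X $ i $ j = X $ j $ i"
proof -
  have "transpose X $ i $ j = X $ i $ j"
    using assms by (simp add: psd_def)
  then show ?thesis by (simp add: transpose_def)
qed

lemma linear_coeff_eq_0_if_quadratic_nonneg:
  fixes a b :: real
  assumes "\<And>t. 0 \<le> 2 * t * a + t\<^sup>2 * b" "0 \<le> b"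
  shows "a = 0"
proof -
  define s where "s = a / (b + 1)"
  have a: "a = s * (b + 1)" using assms(2) by (simp add: s_def)
  have "0 \<le> 2 * (- s) * a + (- s)\<^sup>2 * b" by (rule assms(1))
  then have "s\<^sup>2 * (b + 2) \<le> 0" unfolding a by (simp add: algebra_simps power2_eq_square)
  then have "s = 0" using assms(2) by (simp add: mult_le_0_iff)
  then show ?thesis using a by simp
qed

lemma psd_form_eq_0_imp_kernel:
  assumes "psd X" "x \<bullet> (X *v x) = 0"
  shows "X *v x = 0"
proof -
  define y where "y = X *v x"
  have "0 \<le> 2 * t * (y \<bullet> y) + t\<^sup>2 * (y \<bullet> (X *v y))" for t
  proof -
    have "0 \<le> (x + t *\<^sub>R y) \<bullet> (X *v (x + t *\<^sub>R y))"
      using assms(1) by (simp add: psd_def)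
    also have "\<dots> = x \<bullet> (X *v x) + t * (x \<bullet> (X *v y)) + t * (y \<bullet> (X *v x))
        + t\<^sup>2 * (y \<bullet> (X *v y))"
      by (simp add: matrix_vector_mult_scaleR algebra_simps power2_eq_square)
    finally show ?thesis
      using assms(2) psd_form_commute[OF assms(1), of x y] by (simp add: y_def)
  qed
  moreover have "0 \<le> y \<bullet> (X *v y)" using assms(1) by (simp add: psd_def)
  ultimately have "y \<bullet> y = 0" by (rule linear_coeff_eq_0_if_quadratic_nonneg)
  then show ?thesis by (simp add: y_def)
qed

lemma gram_combination_inner:
  fixes u :: "'n::finite \<Rightarrow> real^'n" and X :: "real^'n^'n"
  assumes "\<forall>i\<in>S. \<forall>j\<in>S. u i \<bullet> u j = X $ i $ j"
  shows "(\<Sum>i\<in>S. c i *\<^sub>R u i) \<bullet> (\<Sum>j\<in>S. d j *\<^sub>R u j)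
    = (\<chi> i. if i \<in> S then c i else 0) \<bullet> (X *v (\<chi> j. if j \<in> S then d j else 0))"
proof -
  have "(\<Sum>i\<in>S. c i *\<^sub>R u i) \<bullet> (\<Sum>j\<in>S. d j *\<^sub>R u j)
      = (\<Sum>j\<in>S. \<Sum>i\<in>S. d j * (c i * (u i \<bullet> u j)))"
    by (simp only: inner_sum_left inner_sum_right inner_scaleR_left inner_scaleR_right
        sum_distrib_left)
  also have "\<dots> = (\<Sum>i\<in>S. c i * (\<Sum>j\<in>S. X $ i $ j * d j))"
    using assms by (subst sum.swap) (auto intro!: sum.cong simp: sum_distrib_left ac_simps)
  also have "\<dots> = (\<chi> i. if i \<in> S then c i else 0) \<bullet> (X *v (\<chi> j. if j \<in> S then d j else 0))"
  proof -
    have "(X *v (\<chi> j. if j \<in> S then d j else 0)) $ i = (\<Sum>j\<in>S. X $ i $ j * d j)" for i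
      by (simp add: matrix_vector_mult_def if_distrib[where f="(*) _"] sum.If_cases)
    then show ?thesis
      by (simp add: inner_vec_def if_distrib[where f="\<lambda>x. x * _"] sum.If_cases)
  qed
  finally show ?thesis .
qed

text \<open>Solvability of the Gram system \<open>u\<^sub>j \<bullet> y = X\<^sub>a\<^sub>j\<close>: the right-hand side vanishes on the
  kernel of \<open>c \<mapsto> \<Sum>c\<^sub>i u\<^sub>i\<close> because that kernel lies in the kernel of \<open>X\<close>.\<close>
lemma gram_row_solution_exists:
  fixes u :: "'n::finite \<Rightarrow> real^'n" and X :: "real^'n^'n"
  assumes "psd X" "\<forall>i\<in>S. \<forall>j\<in>S. u i \<bullet> u j = X $ i $ j"
  shows "\<exists>c. \<forall>j\<in>S. u j \<bullet> (\<Sum>i\<in>S. c i *\<^sub>R u i) = X $ a $ j"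
proof -
  define Phi :: "real^'n \<Rightarrow> real^'n" where "Phi c = (\<Sum>i\<in>S. c $ i *\<^sub>R u i)" for c
  have lin: "linear Phi"
    unfolding Phi_def
    by (intro linearI) (simp_all add: scaleR_add_left sum.distrib scaleR_sum_right)
  have Phi_axis: "Phi (axis j 1) = u j" if "j \<in> S" for j
    using that by (simp add: Phi_def axis_def if_distrib[where f="\<lambda>x. x *\<^sub>R _"] sum.If_cases)
  define r :: "real^'n" where "r = (\<chi> j. if j \<in> S then X $ a $ j else 0)"
  have "r \<in> (Phi -` {0})\<^sup>\<bottom>"
    unfolding orthogonal_comp_def orthogonal_def
  proof clarify
    fix c assume "Phi c = 0"
    let ?x = "\<chi> i. if i \<in> S then c $ i else 0"
    have "?x \<bullet> (X *v ?x) = Phi c \<bullet> Phi c"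
      using gram_combination_inner[OF assms(2), of "\<lambda>i. c $ i" "\<lambda>i. c $ i"] by (simp add: Phi_def)
    then have "X *v ?x = 0"
      using \<open>Phi c = 0\<close> by (intro psd_form_eq_0_imp_kernel[OF assms(1)]) simp
    then have "(X *v ?x) $ a = 0" by simp
    then show "c \<bullet> r = 0"
      by (simp add: r_def inner_vec_def matrix_vector_mult_def if_distrib[where f="(*) _"]
          sum.If_cases mult.commute)
  qed
  moreover have "Phi -` {0} = (range (adjoint Phi))\<^sup>\<bottom>"
    by (rule ker_orthogonal_comp_adjoint[OF lin])
  moreover have "subspace (range (adjoint Phi))"
    by (rule linear_subspace_image[OF adjoint_linear[OF lin] subspace_UNIV])
  ultimately have "r \<in> range (adjoint Phi)"
    using orthogonal_comp_self by metis
  then obtain z where z: "r = adjoint Phi z" by blast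
  obtain y z' where y: "y \<in> span (range Phi)" and z': "\<And>v. v \<in> span (range Phi) \<Longrightarrow> orthogonal z' v"
    and "z = y + z'"
    using orthogonal_subspace_decomp_exists[of "range Phi" z] by blast
  have span_range: "span (range Phi) = range Phi"
    using linear_subspace_image[OF lin subspace_UNIV] by (simp only: span_eq_iff)
  then obtain c where c: "y = Phi c" using y by blast
  show ?thesis
  proof (intro exI[of _ "\<lambda>i. c $ i"] ballI)
    fix j assume "j \<in> S"
    have "X $ a $ j = axis j 1 \<bullet> adjoint Phi z"
      using \<open>j \<in> S\<close> by (simp add: z[symmetric] r_def inner_axis')
    also have "\<dots> = u j \<bullet> z"
      using adjoint_works[OF lin] Phi_axis[OF \<open>j \<in> S\<close>] by metis
    also have "\<dots> = u j \<bullet> y"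
      using z'[of "u j"] Phi_axis[OF \<open>j \<in> S\<close>] span_range
      by (simp add: \<open>z = y + z'\<close> inner_add_right orthogonal_def inner_commute) (metis rangeI)
    finally show "u j \<bullet> (\<Sum>i\<in>S. c $ i *\<^sub>R u i) = X $ a $ j"
      by (simp add: c Phi_def)
  qed
qed

lemma gram_row_solution_norm_le:
  fixes u :: "'n::finite \<Rightarrow> real^'n" and X :: "real^'n^'n"
  assumes "psd X" "\<forall>i\<in>S. \<forall>j\<in>S. u i \<bullet> u j = X $ i $ j"
    and sol: "\<forall>j\<in>S. u j \<bullet> (\<Sum>i\<in>S. c i *\<^sub>R u i) = X $ a $ j"
  shows "(\<Sum>i\<in>S. c i *\<^sub>R u i) \<bullet> (\<Sum>i\<in>S. c i *\<^sub>R u i) \<le> X $ a $ a"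
proof -
  define y where "y = (\<Sum>i\<in>S. c i *\<^sub>R u i)"
  define x :: "real^'n" where "x = (\<chi> i. if i \<in> S then c i else 0)"
  define e :: "real^'n" where "e = axis a 1"
  have yy: "y \<bullet> y = x \<bullet> (X *v x)"
    using gram_combination_inner[OF assms(2), of c c] by (simp add: x_def y_def)
  have "y \<bullet> y = (\<Sum>i\<in>S. c i * X $ a $ i)"
    using sol by (simp add: y_def inner_sum_left)
  also have "\<dots> = (X *v x) $ a"
    by (simp add: x_def matrix_vector_mult_def if_distrib[where f="(*) _"] sum.If_cases mult.commute)
  also have "\<dots> = e \<bullet> (X *v x)"
    by (simp add: e_def inner_axis')
  also have "\<dots> = x \<bullet> (X *v e)"
    by (rule psd_form_commute[OF assms(1)])
  finally have xe: "x \<bullet> (X *v e) = y \<bullet> y" ..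
  have "0 \<le> (x - e) \<bullet> (X *v (x - e))"
    using assms(1) by (simp add: psd_def)
  also have "\<dots> = x \<bullet> (X *v x) - 2 * (x \<bullet> (X *v e)) + e \<bullet> (X *v e)"
    using psd_form_commute[OF assms(1), of e x]
    by (simp add: matrix_vector_mult_diff_distrib inner_diff_left inner_diff_right)
  also have "e \<bullet> (X *v e) = X $ a $ a"
    by (simp add: e_def inner_axis' matrix_vector_mult_basis column_def)
  finally show ?thesis
    using yy xe by (simp add: y_def)
qed

text \<open>The support condition leaves coordinate \<open>a\<close> unused, so the solution of the Gram system
  can be lifted to the right norm along the \<open>a\<close>-th unit vector.\<close>
lemma gram_vectors_extend:
  fixes u :: "'n::finite \<Rightarrow> real^'n" and X :: "real^'n^'n"
  assumes "psd X" "a \<notin> S"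
    and gram: "\<forall>i\<in>S. \<forall>j\<in>S. u i \<bullet> u j = X $ i $ j"
    and supp: "\<forall>i\<in>S. \<forall>k. k \<notin> S \<longrightarrow> u i $ k = 0"
  shows "\<exists>v. (\<forall>j\<in>S. u j \<bullet> v = X $ a $ j) \<and> v \<bullet> v = X $ a $ a
    \<and> (\<forall>k. k \<notin> insert a S \<longrightarrow> v $ k = 0)"
proof -
  obtain c where sol: "\<forall>j\<in>S. u j \<bullet> (\<Sum>i\<in>S. c i *\<^sub>R u i) = X $ a $ j"
    using gram_row_solution_exists[OF assms(1) gram] by blast
  define y where "y = (\<Sum>i\<in>S. c i *\<^sub>R u i)"
  have y_supp: "y $ k = 0" if "k \<notin> S" for k
    using supp that by (simp add: y_def)
  define t where "t = sqrt (X $ a $ a - y \<bullet> y)"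
  have t: "t * t = X $ a $ a - y \<bullet> y"
    using gram_row_solution_norm_le[OF assms(1) gram sol] by (simp add: t_def y_def)
  show ?thesis
  proof (intro exI[of _ "y + t *\<^sub>R axis a 1"] conjI ballI allI impI)
    fix j assume "j \<in> S"
    then show "u j \<bullet> (y + t *\<^sub>R axis a 1) = X $ a $ j"
      using sol supp assms(2) by (simp add: y_def inner_add_right inner_axis)
  next
    show "(y + t *\<^sub>R axis a 1) \<bullet> (y + t *\<^sub>R axis a 1) = X $ a $ a"
      using t y_supp[OF assms(2)]
      by (simp add: inner_add_left inner_add_right inner_axis inner_axis' algebra_simps)
  next
    fix k assume "k \<notin> insert a S"
    then show "(y + t *\<^sub>R axis a 1) $ k = 0"
      using y_supp by (simp add: axis_def)
  qed
qed

lemma psd_gram_vectors_on: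
  fixes X :: "real^'n::finite^'n"
  assumes "psd X"
  shows "\<exists>u::'n \<Rightarrow> real^'n. (\<forall>i\<in>S. \<forall>j\<in>S. u i \<bullet> u j = X $ i $ j)
    \<and> (\<forall>i\<in>S. \<forall>k. k \<notin> S \<longrightarrow> u i $ k = 0)"
  using finite[of S]
proof induct
  case empty
  show ?case by simp
next
  case (insert a S)
  then obtain u :: "'n \<Rightarrow> real^'n" where
    gram: "\<forall>i\<in>S. \<forall>j\<in>S. u i \<bullet> u j = X $ i $ j" and
    supp: "\<forall>i\<in>S. \<forall>k. k \<notin> S \<longrightarrow> u i $ k = 0"
    by blast
  obtain v where v: "\<forall>j\<in>S. u j \<bullet> v = X $ a $ j" "v \<bullet> v = X $ a $ a"
    "\<forall>k. k \<notin> insert a S \<longrightarrow> v $ k = 0"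
    using gram_vectors_extend[OF assms insert(2) gram supp] by blast
  have "(u(a := v)) i \<bullet> (u(a := v)) j = X $ i $ j" if i: "i \<in> insert a S" and j: "j \<in> insert a S" for i j
  proof -
    consider "i = a" "j = a" | "i = a" "j \<in> S" | "i \<in> S" "j = a" | "i \<in> S" "j \<in> S"
      using i j by blast
    then show ?thesis
    proof cases
      case 2
      then show ?thesis using v(1) insert(2) psd_symmetric[OF assms, of a j] by (auto simp: inner_commute)
    next
      case 3
      then show ?thesis using v(1) insert(2) psd_symmetric[OF assms, of a i] by auto
    qed (use v(2) gram insert(2) in auto)
  qed
  moreover have "(u(a := v)) i $ k = 0" if "i \<in> insert a S" "k \<notin> insert a S" for i k
    using that supp v(3) by auto
  ultimately show ?case by blast
qed

lemma psd_gram_vectors: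
  fixes X :: "real^'n::finite^'n"
  assumes "psd X"
  obtains u :: "'n \<Rightarrow> real^'n" where "\<And>i j. u i \<bullet> u j = X $ i $ j"
  using psd_gram_vectors_on[OF assms, of UNIV] by auto

lemma mc_eq_half_weight_plus_ip:
  fixes E :: "'n::finite set set"
  assumes "simple_graph E"
  shows "mc E w = ((\<Sum>e\<in>E. w e) + ip E (\<lambda>e. - w e)) / 2"
proof -
  have cut_value: "(1/2) * edge_sum E (\<lambda>i j. w {i, j} * (1 - y i * y j))
      = ((\<Sum>e\<in>E. w e) + (\<Sum>e\<in>E. - w e * prod y e)) / 2" for y :: "'n \<Rightarrow> real"
  proof -
    have "edge_sum E (\<lambda>i j. w {i, j} * (1 - y i * y j))
        = edge_sum E (\<lambda>i j. w {i, j}) + edge_sum E (\<lambda>i j. - w {i, j} * (y i * y j))"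
      by (simp add: edge_sum_add[symmetric] algebra_simps)
    also have "\<dots> = (\<Sum>e\<in>E. w e) + (\<Sum>e\<in>E. - w e * prod y e)"
      using edge_sum_eq_sum_edges[OF assms, of w] edge_sum_sign_form[OF assms, of "\<lambda>e. - w e" y]
      by simp
    finally show ?thesis by simp
  qed
  define A where "A = (\<lambda>y. \<Sum>e\<in>E. - w e * prod y e) ` (sign_vectors :: ('n \<Rightarrow> real) set)"
  have "mc E w = Max ((\<lambda>t. ((\<Sum>e\<in>E. w e) + t) / 2) ` A)"
    unfolding mc_def A_def image_image cut_value ..
  also have "\<dots> = ((\<Sum>e\<in>E. w e) + Max A) / 2"
    using finite_sign_vectors one_in_sign_vectors
    by (intro mono_Max_commute[symmetric]) (auto simp: A_def mono_def divide_right_mono)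
  also have "Max A = ip E (\<lambda>e. - w e)"
    unfolding A_def ip_eq_Max_sign_form[OF assms] ..
  finally show ?thesis .
qed

lemma frob_laplacian:
  fixes E :: "'n::finite set set"
  assumes "simple_graph E"
  shows "frob (laplacian E w) X = 2 * edge_sum E (\<lambda>i j. w {i, j} * (X $ i $ i - X $ i $ j))"
proof -
  have "(\<Sum>j\<in>UNIV. laplacian E w $ i $ j * X $ i $ j)
      = (\<Sum>j\<in>UNIV. if {i, j} \<in> E then w {i, j} * (X $ i $ i - X $ i $ j) else 0)" for i
  proof -
    have "{i, i} \<notin> E" using simple_graph_edge_neq[OF assms] by blast
    then have "laplacian E w $ i $ j * X $ i $ j = (if j = i then (\<Sum>k\<in>{k. {i, k} \<in> E}. w {i, k}) * X $ i $ i else 0)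
        + (if {i, j} \<in> E then - w {i, j} * X $ i $ j else 0)" for j
      by (auto simp: laplacian_def)
    then have "(\<Sum>j\<in>UNIV. laplacian E w $ i $ j * X $ i $ j)
        = (\<Sum>j\<in>UNIV. if {i, j} \<in> E then w {i, j} * X $ i $ i else 0)
          + (\<Sum>j\<in>UNIV. if {i, j} \<in> E then - w {i, j} * X $ i $ j else 0)"
      by (simp add: sum.distrib sum.inter_filter[symmetric] sum_distrib_right)
    also have "\<dots> = (\<Sum>j\<in>UNIV. if {i, j} \<in> E then w {i, j} * (X $ i $ i - X $ i $ j) else 0)"
      unfolding sum.distrib[symmetric] by (intro sum.cong refl) (simp add: algebra_simps)
    finally show ?thesis .
  qed
  then show ?thesis by (simp add: frob_def edge_sum_def)
qed

lemma psd_mat_1: "psd (mat 1 :: real^'n::finite^'n)"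
  by (simp add: psd_def matrix_vector_mul_lid)

lemma sdp_GW_le_half_weight_plus_sdp:
  fixes E :: "'n::finite set set"
  assumes "simple_graph E"
  shows "sdp_GW E w \<le> ((\<Sum>e\<in>E. w e) + sdp E (\<lambda>e. - w e)) / 2"
  unfolding sdp_GW_def
proof (rule cSup_least)
  show "(\<lambda>X. 1/4 * frob (laplacian E w) X) ` (elliptope :: (real^'n^'n) set) \<noteq> {}"
    using psd_mat_1 by (auto simp: elliptope_def mat_def)
next
  fix r assume "r \<in> (\<lambda>X. 1/4 * frob (laplacian E w) X) ` (elliptope :: (real^'n^'n) set)"
  then obtain X :: "real^'n^'n" where "psd X" "\<forall>i. X $ i $ i = 1" and r: "r = 1/4 * frob (laplacian E w) X"
    by (auto simp: elliptope_def)
  moreover obtain u :: "'n \<Rightarrow> real^'n" where u: "\<And>i j. u i \<bullet> u j = X $ i $ j"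
    using psd_gram_vectors[OF \<open>psd X\<close>] by blast
  ultimately have unit: "\<forall>i. norm (u i) = 1"
    by (simp add: norm_eq_sqrt_inner)
  have "r = (edge_sum E (\<lambda>i j. w {i, j}) + edge_sum E (\<lambda>i j. - w {i, j} * (u i \<bullet> u j))) / 2"
    using \<open>\<forall>i. X $ i $ i = 1\<close>
    by (simp add: r frob_laplacian[OF assms] u edge_sum_add[symmetric] algebra_simps)
  also have "\<dots> \<le> ((\<Sum>e\<in>E. w e) + sdp E (\<lambda>e. - w e)) / 2"
    using vector_configuration_value_le_sdp[OF assms unit, of "\<lambda>e. - w e"]
    by (simp add: edge_sum_eq_sum_edges[OF assms])
  finally show "r \<le> ((\<Sum>e\<in>E. w e) + sdp E (\<lambda>e. - w e)) / 2" .
qed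

theorem mainTheorem3:
  fixes E :: "'n::finite set set" and w :: "'n set \<Rightarrow> real"
  assumes "simple_graph E"
    and "(\<Sum>e\<in>E. w e) \<ge> 0"
    and "mc E w > 0"
  shows "sdp_GW E w \<le> kappa E * mc E w"
proof -
  have "E \<noteq> {}"
    using assms(3) mc_eq_half_weight_plus_ip[OF assms(1)] by (auto simp: ip_empty)
  then have weight: "(\<Sum>e\<in>E. w e) \<le> kappa E * (\<Sum>e\<in>E. w e)"
    using one_le_kappa[OF assms(1)] assms(2) by (simp add: mult_le_cancel_right1)
  have "sdp_GW E w \<le> ((\<Sum>e\<in>E. w e) + sdp E (\<lambda>e. - w e)) / 2"
    by (rule sdp_GW_le_half_weight_plus_sdp[OF assms(1)])
  also have "\<dots> \<le> (kappa E * (\<Sum>e\<in>E. w e) + kappa E * ip E (\<lambda>e. - w e)) / 2"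
    using weight sdp_le_kappa_mult_ip[OF assms(1), of "\<lambda>e. - w e"] by (intro divide_right_mono add_mono) auto
  also have "\<dots> = kappa E * mc E w"
    by (simp add: mc_eq_half_weight_plus_ip[OF assms(1)] algebra_simps)
  finally show ?thesis .
qed

end
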